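(* For every integer $n\ge 2$, $$F(D_n)=\tau(n)+\pi(n-1)-\pi\!\left(\tfrac n2\right)+\gamma_{n/2}(n).$$ In particular, if $n$ is prime, $F(D_n)=\pi(n)-\pi\!\left(\tfrac n2\right)+1$.
   Context: $D_n$ is the graph with vertex set $\{1,\dots,n\}$ in which distinct $a,b$ are adjacent iff $\gcd(a,b)\mid n$ (the maximal Diophantine graph of order $n$). $F(G)$ is the number of vertices of degree $n-1$ in a graph $G$ of order $n$. $\pi(x)$ is the number of primes $\le x$, $\tau(n)$ the number of positive divisors of $n$. For a prime $p$, $\acute v_p(n):=v_p(n)+1$, where $v_p$ is the $p$-adic valuation. For a real $0<x<n$, $\gamma_x(n):=\left|\{p^{\acute v_p(n)} : p \text{ prime},\ p\mid n,\ x<p^{\acute v_p(n)}<n\}\right|$. *)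

theory Defs
  imports Complex_Main "HOL-Computational_Algebra.Primes"
begin

definition graph_degree :: "'a set \<Rightarrow> ('a \<Rightarrow> 'a \<Rightarrow> bool) \<Rightarrow> 'a \<Rightarrow> nat" where
  "graph_degree V E v = card {u \<in> V. E v u}"

definition F_full :: "'a set \<Rightarrow> ('a \<Rightarrow> 'a \<Rightarrow> bool) \<Rightarrow> nat" where
  "F_full V E = card {v \<in> V. graph_degree V E v = card V - 1}"

definition D_vertices :: "nat \<Rightarrow> nat set" where
  "D_vertices n = {1..n}"

definition D_adj :: "nat \<Rightarrow> nat \<Rightarrow> nat \<Rightarrow> bool" where
  "D_adj n a b \<longleftrightarrow> a \<noteq> b \<and> gcd a b dvd n"

definition prime_pi :: "real \<Rightarrow> nat" where
  "prime_pi x = card {p :: nat. prime p \<and> real p \<le> x}"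

definition vacute :: "nat \<Rightarrow> nat \<Rightarrow> nat" where
  "vacute p n = multiplicity p n + 1"

definition gamma_fn :: "real \<Rightarrow> nat \<Rightarrow> nat" where
  "gamma_fn x n = card {q :: nat. \<exists>p. prime p \<and> p dvd n \<and> q = p ^ vacute p n
                          \<and> x < real q \<and> q < n}"

end

theory Submission
  imports Defs
begin

text \<open>A vertex v of D_n has full degree iff gcd v u divides n for every other u \<le> n, which
  certainly holds when v divides n. If v does not divide n, some prime power
  q = p^(v_p(n)+1) divides v; since gcd v q = q does not divide n, v = q, and since
  gcd v (2v) = v, also n < 2v. Conversely, if v = p^(v_p(n)+1) and n/2 < v, no other u \<le> n is
  a multiple of v, so gcd v u is a proper divisor p^i of v with i \<le> v_p(n) and thus divides n.
  Among these exceptional vertices, those with p \<nmid> n are exactly the primes in (n/2, n),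
  counted by \<pi>(n-1) - \<pi>(n/2), and those with p | n are counted by \<gamma>_{n/2}(n).\<close>

lemma graph_degree_eq_card_minus_one_iff:
  assumes "finite V" "v \<in> V" "\<not> E v v"
  shows "graph_degree V E v = card V - 1 \<longleftrightarrow> (\<forall>u \<in> V - {v}. E v u)"
proof -
  have sub: "{u \<in> V. E v u} \<subseteq> V - {v}" using assms(3) by auto
  have card_rest: "card (V - {v}) = card V - 1" using assms(1,2) by simp
  have "graph_degree V E v = card V - 1 \<longleftrightarrow> {u \<in> V. E v u} = V - {v}"
    unfolding graph_degree_def card_rest[symmetric]
    using sub assms(1) by (metis card_subset_eq finite_Diff)
  also have "\<dots> \<longleftrightarrow> (\<forall>u \<in> V - {v}. E v u)" using sub by blast
  finally show ?thesis .
qed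

lemma not_dvd_if_half_less:
  fixes d m :: nat
  assumes "m < 2 * d" "d < m"
  shows "\<not> d dvd m"
proof
  assume "d dvd m"
  then obtain k where k: "m = d * k" by blast
  with assms show False by (cases k; cases "k - 1") auto
qed

lemma prime_power_vacute_not_dvd:
  assumes "prime p" "n > 0"
  shows "\<not> p ^ vacute p n dvd n"
proof -
  have "p ^ vacute p n dvd n \<longleftrightarrow> vacute p n \<le> multiplicity p n"
    using assms by (intro power_dvd_iff_le_multiplicity) (auto simp: not_prime_unit)
  then show ?thesis by (simp add: vacute_def)
qed

lemma full_in_range_imp_prime_power:
  fixes n v :: nat
  assumes v: "v \<in> {1..n}" and not_dvd: "\<not> v dvd n"
    and full: "\<forall>u \<in> {1..n} - {v}. gcd v u dvd n"
  shows "\<exists>p. prime p \<and> v = p ^ vacute p n \<and> n < 2 * v \<and> v < n"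
proof -
  obtain p where p: "prime p" "\<not> multiplicity p v \<le> multiplicity p n"
    using multiplicity_le_imp_dvd[of v n] v not_dvd by force
  define q where "q = p ^ vacute p n"
  have "q dvd v" unfolding q_def vacute_def using p(2) by (intro multiplicity_dvd') simp
  have "\<not> q dvd n" unfolding q_def using p(1) v by (intro prime_power_vacute_not_dvd) auto
  have "q \<in> {1..n}"
  proof -
    have "q \<le> v" using \<open>q dvd v\<close> v by (intro dvd_imp_le) auto
    moreover have "q \<ge> 1" unfolding q_def using p(1) by (simp add: Suc_le_eq prime_gt_0_nat)
    ultimately show ?thesis using v by simp
  qed
  have "q = v"
  proof (rule ccontr)
    assume "q \<noteq> v"
    then have "gcd v q dvd n" using full \<open>q \<in> {1..n}\<close> by blast
    then show False using \<open>q dvd v\<close> \<open>\<not> q dvd n\<close> by (simp add: gcd_nat.absorb2)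
  qed
  have "n < 2 * v"
  proof (rule ccontr)
    assume "\<not> n < 2 * v"
    then have "2 * v \<in> {1..n} - {v}" using v by auto
    then have "gcd v (2 * v) dvd n" using full by blast
    then show False using not_dvd by simp
  qed
  moreover have "v < n" using v not_dvd by (cases "v = n") auto
  ultimately show ?thesis using p(1) \<open>q = v\<close> q_def by blast
qed

lemma prime_power_imp_full_in_range:
  fixes n v :: nat
  assumes "prime p" "v = p ^ vacute p n" "n < 2 * v"
  shows "\<forall>u \<in> {1..n} - {v}. gcd v u dvd n"
proof
  fix u assume u: "u \<in> {1..n} - {v}"
  obtain i where i: "i \<le> vacute p n" "gcd v u = p ^ i"
    using divides_primepow_nat[OF assms(1)] assms(2) by (metis gcd_dvd1)
  have "\<not> v dvd u"
  proof
    assume "v dvd u"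
    then have "v < u" using u dvd_imp_le[of v u] by auto
    then show False using not_dvd_if_half_less[of u v] \<open>v dvd u\<close> u assms(3) by auto
  qed
  then have "i \<noteq> vacute p n" using i assms(2) by (metis gcd_dvd2)
  then have "i \<le> multiplicity p n" using i(1) by (simp add: vacute_def)
  then show "gcd v u dvd n" using i(2) by (simp add: multiplicity_dvd')
qed

lemma D_full_vertex_iff:
  assumes "v \<in> D_vertices n"
  shows "graph_degree (D_vertices n) (D_adj n) v = card (D_vertices n) - 1 \<longleftrightarrow>
         v dvd n \<or> (\<exists>p. prime p \<and> v = p ^ vacute p n \<and> n < 2 * v \<and> v < n)"
proof -
  have "graph_degree (D_vertices n) (D_adj n) v = card (D_vertices n) - 1 \<longleftrightarrow>
        (\<forall>u \<in> {1..n} - {v}. gcd v u dvd n)"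
    using assms by (subst graph_degree_eq_card_minus_one_iff) (auto simp: D_vertices_def D_adj_def)
  also have "\<dots> \<longleftrightarrow> v dvd n \<or> (\<exists>p. prime p \<and> v = p ^ vacute p n \<and> n < 2 * v \<and> v < n)"
  proof
    assume "\<forall>u \<in> {1..n} - {v}. gcd v u dvd n"
    then show "v dvd n \<or> (\<exists>p. prime p \<and> v = p ^ vacute p n \<and> n < 2 * v \<and> v < n)"
      using assms full_in_range_imp_prime_power unfolding D_vertices_def by blast
  next
    assume "v dvd n \<or> (\<exists>p. prime p \<and> v = p ^ vacute p n \<and> n < 2 * v \<and> v < n)"
    then show "\<forall>u \<in> {1..n} - {v}. gcd v u dvd n"
      using prime_power_imp_full_in_range by (metis dvd_trans gcd_dvd1)
  qed
  finally show ?thesis .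
qed

lemma half_less_iff: "real n / 2 < real q \<longleftrightarrow> n < 2 * q"
  by linarith

lemma D_full_vertices_eq:
  assumes "n > 0"
  shows "{v \<in> D_vertices n. graph_degree (D_vertices n) (D_adj n) v = card (D_vertices n) - 1}
       = {d. d dvd n}
         \<union> {p. prime p \<and> real n / 2 < real p \<and> real p \<le> real n - 1}
         \<union> {q. \<exists>p. prime p \<and> p dvd n \<and> q = p ^ vacute p n \<and> real n / 2 < real q \<and> q < n}"
  (is "?full = ?divisors \<union> ?primes \<union> ?powers")
proof (intro equalityI subsetI)
  fix v assume "v \<in> ?full"
  then have "v dvd n \<or> (\<exists>p. prime p \<and> v = p ^ vacute p n \<and> n < 2 * v \<and> v < n)"
    using D_full_vertex_iff by blast
  then show "v \<in> ?divisors \<union> ?primes \<union> ?powers"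
  proof (elim disjE exE conjE)
    fix p assume p: "prime p" "v = p ^ vacute p n" "n < 2 * v" "v < n"
    show ?thesis
    proof (cases "p dvd n")
      case False
      then have "v = p" using p(2) by (simp add: vacute_def not_dvd_imp_multiplicity_0)
      then show ?thesis using p half_less_iff by auto
    qed (use p half_less_iff in blast)
  qed simp
next
  fix v assume "v \<in> ?divisors \<union> ?primes \<union> ?powers"
  then consider "v dvd n" | "v \<in> ?primes" | "v \<in> ?powers" by blast
  then have "v dvd n \<or> (\<exists>p. prime p \<and> v = p ^ vacute p n \<and> n < 2 * v \<and> v < n)"
  proof cases
    case 2
    then have "prime v" "n < 2 * v" "v < n" using half_less_iff by auto
    then have "\<not> v dvd n" by (intro not_dvd_if_half_less)
    then show ?thesis
      using \<open>prime v\<close> \<open>n < 2 * v\<close> \<open>v < n\<close>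
      by (auto simp: vacute_def not_dvd_imp_multiplicity_0)
  next
    case 3
    then show ?thesis using half_less_iff by blast
  qed simp
  moreover from this have "v \<in> D_vertices n"
  proof (elim disjE exE conjE)
    fix p assume "prime p" "v = p ^ vacute p n" "v < n"
    then show ?thesis by (simp add: D_vertices_def Suc_le_eq prime_gt_0_nat)
  qed (use assms in \<open>auto simp: D_vertices_def dvd_imp_le dvd_pos_nat\<close>)
  ultimately show "v \<in> ?full" using D_full_vertex_iff by blast
qed

lemma F_full_D_eq:
  assumes "n > 0"
  shows "F_full (D_vertices n) (D_adj n) =
           card {d. d dvd n} + card {p. prime p \<and> real n / 2 < real p \<and> real p \<le> real n - 1}
           + gamma_fn (real n / 2) n"
proof -
  let ?divisors = "{d. d dvd n}"
  let ?primes = "{p. prime p \<and> real n / 2 < real p \<and> real p \<le> real n - 1}"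
  let ?powers = "{q. \<exists>p. prime p \<and> p dvd n \<and> q = p ^ vacute p n \<and> real n / 2 < real q \<and> q < n}"
  have finite: "finite ?divisors" "finite ?primes" "finite ?powers"
    using assms by (auto intro: finite_subset[of _ "{..n}"])
  have "?divisors \<inter> ?primes = {}"
  proof -
    have "\<not> d dvd n" if "d \<in> ?primes" for d
      using that half_less_iff by (intro not_dvd_if_half_less) auto
    then show ?thesis by blast
  qed
  moreover have "?divisors \<inter> ?powers = {}"
    using prime_power_vacute_not_dvd assms by blast
  moreover have "?primes \<inter> ?powers = {}"
  proof -
    have "\<not> prime (p ^ vacute p n)" if "prime p" "p dvd n" for p
    proof -
      have "multiplicity p n \<noteq> 0"
        using that assms by (simp add: prime_multiplicity_gt_zero_iff)
      then show ?thesis unfolding vacute_def prime_power_iff by simp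
    qed
    then show ?thesis by blast
  qed
  ultimately show ?thesis
    unfolding F_full_def D_full_vertices_eq[OF assms] gamma_fn_def
    using finite by (simp add: card_Un_disjoint Int_Un_distrib2)
qed

lemma prime_pi_split:
  assumes "x \<le> y"
  shows "prime_pi y = prime_pi x + card {p. prime p \<and> x < real p \<and> real p \<le> y}"
proof -
  have bounded: "finite {p::nat. real p \<le> z}" for z
    by (rule finite_subset[of _ "{..nat \<lfloor>z\<rfloor>}"]) (auto intro: le_nat_floor)
  have "{p. prime p \<and> real p \<le> y} =
        {p. prime p \<and> real p \<le> x} \<union> {p. prime p \<and> x < real p \<and> real p \<le> y}"
    using assms by auto
  moreover have "finite {p. prime p \<and> real p \<le> x}" "finite {p. prime p \<and> x < real p \<and> real p \<le> y}"
    by (auto intro: finite_subset[OF _ bounded])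
  ultimately show ?thesis
    unfolding prime_pi_def by (simp add: card_Un_disjoint disjoint_iff)
qed

lemma gamma_fn_prime_eq_0:
  assumes "prime n"
  shows "gamma_fn x n = 0"
proof -
  have "\<not> p ^ vacute p n < n" if "prime p" "p dvd n" for p
  proof -
    have "p = n" using primes_dvd_imp_eq that assms by blast
    then show ?thesis using that(1) by (simp add: vacute_def self_le_power prime_ge_1_nat not_less)
  qed
  then have "{q. \<exists>p. prime p \<and> p dvd n \<and> q = p ^ vacute p n \<and> x < real q \<and> q < n} = {}"
    by auto
  then show ?thesis unfolding gamma_fn_def by (simp only: card.empty)
qed

lemma card_divisors_prime:
  assumes "prime (n :: nat)"
  shows "card {d. d dvd n} = 2"
proof -
  have "{d. d dvd n} = {1, n}" using assms by (auto simp: prime_nat_iff)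
  then show ?thesis using prime_gt_1_nat[OF assms] by simp
qed

theorem mainTheorem6:
  fixes n :: nat
  assumes "n \<ge> 2"
  shows "int (F_full (D_vertices n) (D_adj n)) =
           int (card {d. d dvd n}) + int (prime_pi (real n - 1)) - int (prime_pi (real n / 2))
           + int (gamma_fn (real n / 2) n)
       \<and> (prime n \<longrightarrow>
           int (F_full (D_vertices n) (D_adj n)) =
             int (prime_pi (real n)) - int (prime_pi (real n / 2)) + 1)"
proof -
  have "prime_pi (real n - 1) =
          prime_pi (real n / 2) + card {p. prime p \<and> real n / 2 < real p \<and> real p \<le> real n - 1}"
    using assms by (intro prime_pi_split) simp
  then have general: "int (F_full (D_vertices n) (D_adj n)) =
           int (card {d. d dvd n}) + int (prime_pi (real n - 1)) - int (prime_pi (real n / 2))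
           + int (gamma_fn (real n / 2) n)"
    using F_full_D_eq assms by simp
  moreover have "int (F_full (D_vertices n) (D_adj n)) =
                   int (prime_pi (real n)) - int (prime_pi (real n / 2)) + 1" if "prime n"
  proof -
    have "{p. prime p \<and> real n - 1 < real p \<and> real p \<le> real n} = {n}"
      using that by auto
    then have "prime_pi (real n) = prime_pi (real n - 1) + 1"
      using prime_pi_split[of "real n - 1" "real n"] by simp
    then show ?thesis
      using general card_divisors_prime gamma_fn_prime_eq_0 that by simp
  qed
  ultimately show ?thesis by blast
qed

end
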